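(* For every real $u>0$, $$u\sum_{p\ge 3}\frac{\log p}{(p-2)p^u}\le 1,$$ where the sum is over primes $p\ge3$. *)

theory Defs
  imports "HOL-Analysis.Analysis" "HOL-Computational_Algebra.Primes"
begin

end

theory Submission
  imports Defs "HOL-Real_Asymp.Real_Asymp"
begin

(* Write s = 1 + u and t = 3 powr -u, and split each term as
     ln p / ((p - 2) p^u) = ln p / (p^s - 1) + e(p).
   Since ln p / (p^s - 1) = sum_{k >= 1} ln p p^(-k s), the sum A of the first parts times the odd
   zeta function Z = sum_j (2j + 1)^(-s) is at most L = sum_j ln (2j + 1) (2j + 1)^(-s): every odd
   n = p^k m collects at most ln n.  Comparing odd sums with integrals gives Z <= 1 + t/3 + t/(2u)
   and Z - u L >= G := 1 + (t/3)(1 - u ln 3) - (t/2) ln 5, while the excesses e(p) sum to at most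
   E := ln 3 t(2 - t)/(3 - t) + 0.3416 (2t - t^2).  So the whole sum S = A + sum e(p) satisfies
   u S Z <= u L + u E Z <= u L + (u + u t/3 + t/2) E, and the one-variable inequality
   (u + u t/3 + t/2) E <= G, checked on a chain of intervals covering (0, 2] and by crude
   estimates for u >= 2, gives u S Z <= Z. *)

section \<open>Bounds for exp and ln\<close>

lemma exp_lower_Taylor:
  fixes x :: real
  assumes "0 \<le> x \<or> even n"
  shows "(\<Sum>m<n. x ^ m / fact m) \<le> exp x"
proof -
  obtain t where "exp x = (\<Sum>m<n. x ^ m / fact m) + exp t / fact n * x ^ n"
    using Maclaurin_exp_le[of x n] by blast
  moreover have "0 \<le> exp t / fact n * x ^ n"
    using assms by (auto simp: zero_le_even_power)
  ultimately show ?thesis by linarith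
qed

lemma ln_le_of_le_Taylor_power:
  fixes c y :: real
  assumes "0 < c" "0 \<le> y" "c \<le> (\<Sum>m<n. y ^ m / fact m) ^ k"
  shows "ln c \<le> k * y"
proof -
  have "(\<Sum>m<n. y ^ m / fact m) ^ k \<le> exp y ^ k"
    using assms(2) by (intro power_mono exp_lower_Taylor sum_nonneg) auto
  then have "c \<le> exp (k * y)"
    using assms(3) by (simp add: exp_of_nat_mult)
  then show ?thesis
    using assms(1) ln_le_cancel_iff[of c "exp (k * y)"] by simp
qed

lemma ln_ge_of_Taylor_power_le:
  fixes c y :: real
  assumes "even n" "0 < (\<Sum>m<n. (-y) ^ m / fact m)" "(1 / (\<Sum>m<n. (-y) ^ m / fact m)) ^ k \<le> c"
  shows "k * y \<le> ln c"
proof -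
  have "exp (k * y) = (1 / exp (-y)) ^ k"
    by (simp add: exp_of_nat_mult exp_minus inverse_eq_divide)
  also have "\<dots> \<le> (1 / (\<Sum>m<n. (-y) ^ m / fact m)) ^ k"
    using assms(1,2) exp_lower_Taylor[of "-y" n] by (intro power_mono divide_left_mono) auto
  finally have "exp (k * y) \<le> c"
    using assms(3) by linarith
  then show ?thesis
    by (metis exp_gt_zero exp_le_cancel_iff exp_ln order_less_le_trans)
qed

lemma ln_3_bounds: "1.098 \<le> ln (3::real)" "ln (3::real) \<le> 1.0988"
proof -
  show "1.098 \<le> ln (3::real)"
    using ln_ge_of_Taylor_power_le[of 4 "0.13725" 8 3, OF even_numeral]
    by (simp add: numeral_eq_Suc power_divide)
  show "ln (3::real) \<le> 1.0988"
    using ln_le_of_le_Taylor_power[of 3 "0.13735" 6 8]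
    by (simp add: numeral_eq_Suc power_divide)
qed

lemma ln_small_primes_le:
  shows "ln (5::real) \<le> 1.6096"
    and "ln (7::real) \<le> 1.9461"
    and "ln (11::real) \<le> 2.398"
    and "ln (13::real) \<le> 2.5651"
    and "ln (17::real) \<le> 2.8334"
    and "ln (19::real) \<le> 2.9446"
    and "ln (23::real) \<le> 3.1356"
    and "ln (29::real) \<le> 3.3674"
    and "ln (31::real) \<le> 3.4341"
proof -
  show "ln (5::real) \<le> 1.6096"
    using ln_le_of_le_Taylor_power[of 5 "0.2012" 6 8] by (simp add: numeral_eq_Suc power_divide)
  show "ln (7::real) \<le> 1.9461"
    using ln_le_of_le_Taylor_power[of 7 "0.2432625" 6 8] by (simp add: numeral_eq_Suc power_divide)
  show "ln (11::real) \<le> 2.398"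
    using ln_le_of_le_Taylor_power[of 11 "0.29975" 6 8] by (simp add: numeral_eq_Suc power_divide)
  show "ln (13::real) \<le> 2.5651"
    using ln_le_of_le_Taylor_power[of 13 "0.3206375" 6 8] by (simp add: numeral_eq_Suc power_divide)
  show "ln (17::real) \<le> 2.8334"
    using ln_le_of_le_Taylor_power[of 17 "0.354175" 6 8] by (simp add: numeral_eq_Suc power_divide)
  show "ln (19::real) \<le> 2.9446"
    using ln_le_of_le_Taylor_power[of 19 "0.368075" 6 8] by (simp add: numeral_eq_Suc power_divide)
  show "ln (23::real) \<le> 3.1356"
    using ln_le_of_le_Taylor_power[of 23 "0.39195" 6 8] by (simp add: numeral_eq_Suc power_divide)
  show "ln (29::real) \<le> 3.3674"
    using ln_le_of_le_Taylor_power[of 29 "0.420925" 6 8] by (simp add: numeral_eq_Suc power_divide)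
  show "ln (31::real) \<le> 3.4341"
    using ln_le_of_le_Taylor_power[of 31 "0.4292625" 6 8] by (simp add: numeral_eq_Suc power_divide)
qed

section \<open>Sums over odd integers compared with integrals\<close>

lemma antiderivative_diff_ge:
  fixes F f :: "real \<Rightarrow> real"
  assumes "a \<le> b"
    and "\<And>x. a \<le> x \<Longrightarrow> x \<le> b \<Longrightarrow> (F has_real_derivative - f x) (at x)"
    and "\<And>x. a \<le> x \<Longrightarrow> x \<le> b \<Longrightarrow> m \<le> f x"
  shows "(b - a) * m \<le> F a - F b"
proof (cases "a = b")
  case False
  then obtain z where "a < z" "z < b" "F b - F a = (b - a) * - f z"
    using MVT2[of a b F "\<lambda>x. - f x"] assms(1,2) by force
  have "m \<le> f z"
    using \<open>a < z\<close> \<open>z < b\<close> assms(3) by simp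
  then have "(b - a) * m \<le> (b - a) * f z"
    using assms(1) by (simp add: mult_left_mono)
  with \<open>F b - F a = (b - a) * - f z\<close> show ?thesis
    by simp
qed simp

lemma antiderivative_diff_le:
  fixes F f :: "real \<Rightarrow> real"
  assumes "a \<le> b"
    and "\<And>x. a \<le> x \<Longrightarrow> x \<le> b \<Longrightarrow> (F has_real_derivative - f x) (at x)"
    and "\<And>x. a \<le> x \<Longrightarrow> x \<le> b \<Longrightarrow> f x \<le> M"
  shows "F a - F b \<le> (b - a) * M"
proof -
  have "(b - a) * - M \<le> - F a - - F b"
    using assms DERIV_minus[OF assms(2)]
    by (intro antiderivative_diff_ge[where f="\<lambda>x. - f x"]) auto
  then show ?thesis
    by simp
qed

lemma sum_odd_le_antiderivative:
  fixes f F :: "real \<Rightarrow> real"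
  assumes deriv: "\<And>x. a \<le> x \<Longrightarrow> (F has_real_derivative - f x) (at x)"
    and anti: "\<And>x y. a \<le> x \<Longrightarrow> x \<le> y \<Longrightarrow> f y \<le> f x"
    and "J \<le> M" "a \<le> 2 * real J - 1"
  shows "(\<Sum>j\<in>{J..<M}. f (2 * real j + 1)) \<le> (F (2 * real J - 1) - F (2 * real M - 1)) / 2"
proof -
  have "f (2 * real j + 1) \<le> (F (2 * real j - 1) - F (2 * real (Suc j) - 1)) / 2"
    if "J \<le> j" for j
  proof -
    have "a \<le> 2 * real j - 1"
      using that assms(4) by simp
    then have "(2 * real j + 1 - (2 * real j - 1)) * f (2 * real j + 1)
        \<le> F (2 * real j - 1) - F (2 * real j + 1)"
      by (intro antiderivative_diff_ge[where f=f] deriv anti) auto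
    then show ?thesis
      by (simp add: algebra_simps)
  qed
  then have "(\<Sum>j\<in>{J..<M}. f (2 * real j + 1))
      \<le> (\<Sum>j\<in>{J..<M}. (F (2 * real j - 1) - F (2 * real (Suc j) - 1)) / 2)"
    by (intro sum_mono) auto
  also have "\<dots> = (F (2 * real J - 1) - F (2 * real M - 1)) / 2"
    using sum_Suc_diff'[OF assms(3), of "\<lambda>j. - F (2 * real j - 1) / 2"] by (simp add: diff_divide_distrib)
  finally show ?thesis .
qed

lemma sum_odd_ge_antiderivative:
  fixes f F :: "real \<Rightarrow> real"
  assumes deriv: "\<And>x. a \<le> x \<Longrightarrow> (F has_real_derivative - f x) (at x)"
    and anti: "\<And>x y. a \<le> x \<Longrightarrow> x \<le> y \<Longrightarrow> f y \<le> f x"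
    and "J \<le> M" "a \<le> 2 * real J + 1"
  shows "(F (2 * real J + 1) - F (2 * real M + 1)) / 2 \<le> (\<Sum>j\<in>{J..<M}. f (2 * real j + 1))"
proof -
  have "(F (2 * real j + 1) - F (2 * real (Suc j) + 1)) / 2 \<le> f (2 * real j + 1)"
    if "J \<le> j" for j
  proof -
    have "a \<le> 2 * real j + 1"
      using that assms(4) by simp
    then have "F (2 * real j + 1) - F (2 * real j + 3) \<le> (2 * real j + 3 - (2 * real j + 1)) * f (2 * real j + 1)"
      by (intro antiderivative_diff_le[where f=f] deriv anti) auto
    then show ?thesis
      by (simp add: algebra_simps)
  qed
  then have "(\<Sum>j\<in>{J..<M}. (F (2 * real j + 1) - F (2 * real (Suc j) + 1)) / 2)
      \<le> (\<Sum>j\<in>{J..<M}. f (2 * real j + 1))"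
    by (intro sum_mono) auto
  moreover have "(\<Sum>j\<in>{J..<M}. (F (2 * real j + 1) - F (2 * real (Suc j) + 1)) / 2)
      = (F (2 * real J + 1) - F (2 * real M + 1)) / 2"
    using sum_Suc_diff'[OF assms(3), of "\<lambda>j. - F (2 * real j + 1) / 2"] by (simp add: diff_divide_distrib)
  ultimately show ?thesis by simp
qed

lemma powr_antiderivative:
  fixes u x :: real
  assumes "0 < u" "0 < x"
  shows "((\<lambda>x. x powr (- u) / u) has_real_derivative - (x powr (- (1 + u)))) (at x)"
  using assms by (auto intro!: derivative_eq_intros simp: powr_diff powr_minus field_simps)

lemma ln_powr_antiderivative:
  fixes u x :: real
  assumes "0 < u" "0 < x"
  shows "((\<lambda>x. x powr (- u) * (u * ln x + 1) / u\<^sup>2) has_real_derivative - (ln x * x powr (- (1 + u)))) (at x)"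
  using assms by (auto intro!: derivative_eq_intros simp: powr_diff powr_minus field_simps power2_eq_square)

lemma ln_powr_antimono:
  fixes s x y :: real
  assumes "exp 1 \<le> x" "x \<le> y" "1 \<le> s"
  shows "ln y * y powr (- s) \<le> ln x * x powr (- s)"
proof -
  have "1 \<le> x"
    using assms(1) exp_ge_add_one_self[of 1] by linarith
  then have x: "0 < x" "0 < y" "0 \<le> ln x / x"
    using assms(2) by simp_all
  have "ln y / y \<le> ln x / x"
    using assms(1,2) by (rule ln_x_over_x_mono)
  moreover have "y powr (1 - s) \<le> x powr (1 - s)"
    using assms x by (intro powr_mono2') auto
  ultimately have "ln y / y * y powr (1 - s) \<le> ln x / x * x powr (1 - s)"
    using x by (intro mult_mono) auto
  moreover have "z powr (1 - s) = z * z powr (- s)" if "0 < z" for z :: real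
    using powr_add[of z 1 "- s"] that by simp
  ultimately show ?thesis
    using x by simp
qed

section \<open>The odd zeta function\<close>

(* (1 - 2 powr -s) * zeta s and minus its derivative. *)
definition odd_zeta :: "real \<Rightarrow> real" where
  "odd_zeta s = (\<Sum>j. (2 * real j + 1) powr (- s))"

definition odd_log_zeta :: "real \<Rightarrow> real" where
  "odd_log_zeta s = (\<Sum>j. ln (2 * real j + 1) * (2 * real j + 1) powr (- s))"

lemma summable_if_partial_sums_le:
  fixes a :: "nat \<Rightarrow> real"
  assumes "\<And>n. 0 \<le> a n" "\<And>n. (\<Sum>k<n. a k) \<le> B"
  shows "summable a" "suminf a \<le> B"
proof -
  show "summable a"
  proof (rule bounded_imp_summable)
    show "sum a {..n} \<le> B" for n
      using assms(2)[of "Suc n"] by (simp only: lessThan_Suc_atMost)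
  qed (rule assms(1))
  then show "suminf a \<le> B"
    using assms(2) by (rule suminf_le_const)
qed

lemma sum_lessThan_split_at_2:
  fixes f :: "nat \<Rightarrow> real"
  assumes "2 \<le> M"
  shows "(\<Sum>j<M. f j) = f 0 + f 1 + (\<Sum>j\<in>{2..<M}. f j)"
  using sum.atLeastLessThan_concat[of 0 2 M f] assms by (simp add: atLeast0LessThan numeral_2_eq_2)

lemma powr_minus_one_minus:
  fixes x u :: real
  assumes "0 < x"
  shows "x powr (- 1 - u) = x powr (- u) / x"
proof -
  have "x powr (- 1 - u) = x powr (- u - 1)"
    by (rule arg_cong[where f = "\<lambda>e. x powr e"]) simp
  also have "\<dots> = x powr (- u) / x"
    using powr_diff[of x "- u" 1] assms by simp
  finally show ?thesis .
qed

lemma odd_powr_partial_sum_le: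
  fixes u :: real
  assumes "0 < u"
  shows "(\<Sum>j<M. (2 * real j + 1) powr (- (1 + u))) \<le> 1 + 3 powr (- u) / 3 + 3 powr (- u) / (2 * u)"
proof -
  let ?z = "\<lambda>j. (2 * real j + 1) powr (- (1 + u))"
  let ?H = "\<lambda>x. x powr (- u) / u"
  have "(\<Sum>j<M. ?z j) \<le> (\<Sum>j<M + 2. ?z j)"
    by (intro sum_mono2) auto
  also have "\<dots> = 1 + 3 powr (- u) / 3 + (\<Sum>j\<in>{2..<M + 2}. ?z j)"
    by (subst sum_lessThan_split_at_2) (simp_all add: powr_minus_one_minus)
  also have "(\<Sum>j\<in>{2..<M + 2}. ?z j) \<le> (?H (2 * real 2 - 1) - ?H (2 * real (M + 2) - 1)) / 2"
    using assms powr_antiderivative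
    by (intro sum_odd_le_antiderivative[where a = 1]) (auto intro: powr_mono2')
  also have "\<dots> \<le> 3 powr (- u) / (2 * u)"
    using assms by simp
  finally show ?thesis
    by simp
qed

lemma odd_powr_partial_sum_ge:
  fixes u :: real
  assumes "0 < u" "2 \<le> M"
  shows "1 + 3 powr (- u) / 3 + (5 powr (- u) - (2 * real M + 1) powr (- u)) / (2 * u)
    \<le> (\<Sum>j<M. (2 * real j + 1) powr (- (1 + u)))"
proof -
  let ?z = "\<lambda>j. (2 * real j + 1) powr (- (1 + u))"
  let ?H = "\<lambda>x. x powr (- u) / u"
  have "(?H (2 * real 2 + 1) - ?H (2 * real M + 1)) / 2 \<le> (\<Sum>j\<in>{2..<M}. ?z j)"
    using assms powr_antiderivative
    by (intro sum_odd_ge_antiderivative[where a = 1]) (auto intro: powr_mono2')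
  moreover have "(\<Sum>j<M. ?z j) = 1 + 3 powr (- u) / 3 + (\<Sum>j\<in>{2..<M}. ?z j)"
    using assms(2) by (subst sum_lessThan_split_at_2) (simp_all add: powr_minus_one_minus)
  ultimately show ?thesis
    by (simp add: diff_divide_distrib)
qed

lemma odd_log_powr_partial_sum_le:
  fixes u :: real
  assumes "0 < u"
  shows "(\<Sum>j<M. ln (2 * real j + 1) * (2 * real j + 1) powr (- (1 + u)))
    \<le> ln 3 * 3 powr (- u) / 3 + 3 powr (- u) * (u * ln 3 + 1) / (2 * u\<^sup>2)"
proof -
  let ?l = "\<lambda>j. ln (2 * real j + 1) * (2 * real j + 1) powr (- (1 + u))"
  let ?F = "\<lambda>x. x powr (- u) * (u * ln x + 1) / u\<^sup>2"
  have "(\<Sum>j<M. ?l j) \<le> (\<Sum>j<M + 2. ?l j)"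
    by (intro sum_mono2) auto
  also have "\<dots> = ln 3 * 3 powr (- u) / 3 + (\<Sum>j\<in>{2..<M + 2}. ?l j)"
    by (subst sum_lessThan_split_at_2) (simp_all add: powr_minus_one_minus)
  also have "(\<Sum>j\<in>{2..<M + 2}. ?l j) \<le> (?F (2 * real 2 - 1) - ?F (2 * real (M + 2) - 1)) / 2"
  proof (intro sum_odd_le_antiderivative[where a = 3])
    show "(?F has_real_derivative - (ln x * x powr (- (1 + u)))) (at x)" if "3 \<le> x" for x
      using assms that by (intro ln_powr_antiderivative) auto
    show "ln y * y powr (- (1 + u)) \<le> ln x * x powr (- (1 + u))" if "3 \<le> x" "x \<le> y" for x y
      using assms that exp_le by (intro ln_powr_antimono) auto
  qed auto
  also have "\<dots> \<le> 3 powr (- u) * (u * ln 3 + 1) / (2 * u\<^sup>2)"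
    using assms by (simp add: field_simps)
  finally show ?thesis
    by simp
qed

lemma summable_odd_powr:
  fixes s :: real
  assumes "1 < s"
  shows "summable (\<lambda>j. (2 * real j + 1) powr (- s))"
    and "summable (\<lambda>j. ln (2 * real j + 1) * (2 * real j + 1) powr (- s))"
  using summable_if_partial_sums_le(1)[OF _ odd_powr_partial_sum_le[of "s - 1"]]
    summable_if_partial_sums_le(1)[OF _ odd_log_powr_partial_sum_le[of "s - 1"]] assms
  by auto

lemma odd_zeta_bounds:
  fixes u :: real
  assumes "0 < u"
  shows "1 + 3 powr (- u) / 3 + 5 powr (- u) / (2 * u) \<le> odd_zeta (1 + u)"
    and "odd_zeta (1 + u) \<le> 1 + 3 powr (- u) / 3 + 3 powr (- u) / (2 * u)"
proof -
  let ?z = "\<lambda>j. (2 * real j + 1) powr (- (1 + u))"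
  have summable: "summable ?z"
    using assms by (intro summable_odd_powr) simp
  have "1 + 3 powr (- u) / 3 + (5 powr (- u) - (2 * real M + 1) powr (- u)) / (2 * u) \<le> suminf ?z"
    if "2 \<le> M" for M
    using odd_powr_partial_sum_ge[OF assms that] sum_le_suminf[OF summable, of "{..<M}"] by force
  moreover have "(\<lambda>M. (2 * real M + 1) powr (- u)) \<longlonglongrightarrow> 0"
    using assms by real_asymp
  then have "(\<lambda>M. 1 + 3 powr (- u) / 3 + (5 powr (- u) - (2 * real M + 1) powr (- u)) / (2 * u))
      \<longlonglongrightarrow> 1 + 3 powr (- u) / 3 + (5 powr (- u) - 0) / (2 * u)"
    using assms by (intro tendsto_intros) simp_all
  then have "(\<lambda>M. 1 + 3 powr (- u) / 3 + (5 powr (- u) - (2 * real M + 1) powr (- u)) / (2 * u))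
      \<longlonglongrightarrow> 1 + 3 powr (- u) / 3 + 5 powr (- u) / (2 * u)"
    by simp
  ultimately show "1 + 3 powr (- u) / 3 + 5 powr (- u) / (2 * u) \<le> odd_zeta (1 + u)"
    unfolding odd_zeta_def by (intro LIMSEQ_le_const2) auto
  show "odd_zeta (1 + u) \<le> 1 + 3 powr (- u) / 3 + 3 powr (- u) / (2 * u)"
    unfolding odd_zeta_def using summable odd_powr_partial_sum_le[OF assms] by (rule suminf_le_const)
qed

lemma odd_log_zeta_le:
  fixes u :: real
  assumes "0 < u"
  shows "odd_log_zeta (1 + u) \<le> ln 3 * 3 powr (- u) / 3 + 3 powr (- u) * (u * ln 3 + 1) / (2 * u\<^sup>2)"
  unfolding odd_log_zeta_def using summable_odd_powr(2)[of "1 + u"] assms odd_log_powr_partial_sum_le[OF assms]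
  by (intro suminf_le_const) auto

definition zeta_gap_bound :: "real \<Rightarrow> real \<Rightarrow> real" where
  "zeta_gap_bound u t = 1 + t / 3 * (1 - u * ln 3) - t * ln 5 / 2"

lemma odd_zeta_minus_log_zeta_ge:
  fixes u :: real
  assumes "0 < u"
  shows "zeta_gap_bound u (3 powr (- u)) \<le> odd_zeta (1 + u) - u * odd_log_zeta (1 + u)"
proof -
  define t where "t = (3::real) powr (- u)"
  have "5 powr (- u) = t * exp (- u * ln (5 / 3))"
    by (simp add: t_def powr_def ln_div exp_add[symmetric] algebra_simps)
  also have "\<dots> \<ge> t * (1 - u * ln (5 / 3))"
    using exp_ge_add_one_self[of "- u * ln (5 / 3)"] by (simp add: t_def)
  finally have "t * (1 - u * (ln 5 - ln 3)) \<le> 5 powr (- u)"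
    by (simp add: ln_div)
  then have "- (t * ln 5 / 2) \<le> 5 powr (- u) / (2 * u) - t * (u * ln 3 + 1) / (2 * u)"
    using assms by (simp add: field_simps)
  moreover have "u * odd_log_zeta (1 + u) \<le> u * (ln 3 * t / 3 + t * (u * ln 3 + 1) / (2 * u\<^sup>2))"
    using odd_log_zeta_le[OF assms] assms unfolding t_def by (auto intro: mult_left_mono)
  moreover have "u * (ln 3 * t / 3 + t * (u * ln 3 + 1) / (2 * u\<^sup>2))
      = u * ln 3 * t / 3 + t * (u * ln 3 + 1) / (2 * u)"
    using assms by (simp add: field_simps power2_eq_square)
  moreover have "1 + t / 3 + 5 powr (- u) / (2 * u) \<le> odd_zeta (1 + u)"
    using odd_zeta_bounds(1)[OF assms] unfolding t_def .
  moreover have "t / 3 * (1 - u * ln 3) = t / 3 - u * ln 3 * t / 3"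
    by (simp add: algebra_simps)
  ultimately show ?thesis
    unfolding zeta_gap_bound_def t_def by linarith
qed

section \<open>Prime powers against the odd zeta function\<close>

lemma sum_multiplicity_ln_le:
  fixes n :: nat
  assumes "finite F" "\<forall>p\<in>F. prime p" "0 < n"
  shows "(\<Sum>p\<in>F. real (multiplicity p n) * ln (real p)) \<le> ln (real n)"
proof -
  let ?P = "prime_factors n"
  let ?w = "\<lambda>p. real (multiplicity p n) * ln (real p)"
  have "real n = real (\<Prod>p\<in>?P. p ^ multiplicity p n)"
    using prod_prime_factors[of n] assms(3) by simp
  then have "real n = (\<Prod>p\<in>?P. real p ^ multiplicity p n)"
    by simp
  then have ln_n: "ln (real n) = (\<Sum>p\<in>?P. ?w p)"
    using ln_prod[of ?P "\<lambda>p. real p ^ multiplicity p n"]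
    by (simp add: ln_realpow in_prime_factors_iff prime_gt_0_nat)
  have "(\<Sum>p\<in>F. ?w p) = (\<Sum>p\<in>F \<inter> ?P. ?w p)"
  proof (rule sum.mono_neutral_right)
    show "\<forall>p\<in>F - F \<inter> ?P. ?w p = 0"
    proof
      fix p
      assume "p \<in> F - F \<inter> ?P"
      then have "\<not> p dvd n"
        using assms by (auto simp: in_prime_factors_iff)
      then show "?w p = 0"
        by (simp add: not_dvd_imp_multiplicity_0)
    qed
  qed (use assms(1) in auto)
  also have "\<dots> \<le> (\<Sum>p\<in>?P. ?w p)"
    by (intro sum_mono2) (auto simp: in_prime_factors_iff prime_ge_1_nat)
  finally show ?thesis
    using ln_n by simp
qed

definition odd_factor_product :: "nat \<times> nat \<times> nat \<Rightarrow> nat" where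
  "odd_factor_product x = fst x ^ fst (snd x) * (2 * snd (snd x) + 1)"

lemma fibre_sum_ln_le:
  fixes n :: nat
  assumes "finite F" "\<forall>p\<in>F. prime p" "0 < n"
  shows "(\<Sum>x\<in>{x \<in> F \<times> {1..K} \<times> {..<J}. odd_factor_product x = n}. ln (real (fst x))) \<le> ln (real n)"
proof -
  let ?fibre = "{x \<in> F \<times> {1..K} \<times> {..<J}. odd_factor_product x = n}"
  let ?B = "\<lambda>p. {1..multiplicity p n}"
  let ?drop = "\<lambda>x :: nat \<times> nat \<times> nat. (fst x, fst (snd x))"
  have prime_pos: "0 < p" if "p \<in> F" for p
    using assms(2) that prime_gt_0_nat by blast
  have "inj_on ?drop ?fibre"
    by (rule inj_onI) (auto simp: odd_factor_product_def dest: prime_pos)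
  then have "(\<Sum>x\<in>?fibre. ln (real (fst x))) = (\<Sum>y\<in>?drop ` ?fibre. ln (real (fst y)))"
    by (simp add: sum.reindex)
  also have "\<dots> \<le> (\<Sum>y\<in>Sigma F ?B. ln (real (fst y)))"
  proof (rule sum_mono2)
    show "?drop ` ?fibre \<subseteq> Sigma F ?B"
    proof
      fix y
      assume "y \<in> ?drop ` ?fibre"
      then obtain p k j where y: "y = (p, k)" "p \<in> F" "1 \<le> k" "odd_factor_product (p, k, j) = n"
        by auto
      then have "p ^ k dvd n" "prime p"
        using assms(2) by (auto simp: odd_factor_product_def)
      then have "k \<le> multiplicity p n"
        using assms(3) by (intro multiplicity_geI) auto
      then show "y \<in> Sigma F ?B"
        using y by simp
    qed
  qed (use assms(1) in \<open>auto simp: Suc_le_eq dest: prime_pos\<close>)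
  also have "\<dots> = (\<Sum>p\<in>F. real (multiplicity p n) * ln (real p))"
    using assms(1) sum.Sigma[of F ?B "\<lambda>p k. ln (real p)"] by (simp add: split_def)
  also have "\<dots> \<le> ln (real n)"
    using assms by (rule sum_multiplicity_ln_le)
  finally show ?thesis .
qed

lemma power_powr:
  fixes x a :: real
  assumes "0 < x"
  shows "(x ^ n) powr a = (x powr a) ^ n"
  using assms by (simp add: powr_realpow[symmetric] powr_powr powr_power mult.commute)

lemma sum_odd_le_odd_log_zeta:
  fixes s :: real
  assumes "1 < s" "finite N" "\<forall>n\<in>N. odd n"
  shows "(\<Sum>n\<in>N. ln (real n) * real n powr (- s)) \<le> odd_log_zeta s"
proof -
  define M where "M = Suc (Max (insert 0 N))"
  have "N \<subseteq> (\<lambda>j. 2 * j + 1) ` {..<M}"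
  proof
    fix n
    assume "n \<in> N"
    then have "odd n" "n < M"
      using assms(2,3) by (auto simp: M_def le_imp_less_Suc)
    then show "n \<in> (\<lambda>j. 2 * j + 1) ` {..<M}"
      by (intro image_eqI[of n _ "n div 2"]) auto
  qed
  then have "(\<Sum>n\<in>N. ln (real n) * real n powr (- s))
      \<le> (\<Sum>n\<in>(\<lambda>j. 2 * j + 1) ` {..<M}. ln (real n) * real n powr (- s))"
    by (intro sum_mono2) auto
  also have "\<dots> = (\<Sum>j<M. ln (2 * real j + 1) * (2 * real j + 1) powr (- s))"
    by (subst sum.reindex) (auto simp: inj_on_def add.commute)
  also have "\<dots> \<le> odd_log_zeta s"
    unfolding odd_log_zeta_def using summable_odd_powr(2)[OF assms(1)] by (intro sum_le_suminf) auto
  finally show ?thesis .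
qed

(* Expanding the product, the terms with p ^ k * (2 * j + 1) = n carry the weight ln p, and these
   add up to at most ln n. *)
lemma truncated_log_sum_times_odd_zeta_le:
  fixes s :: real
  assumes "1 < s" "finite F" "\<forall>p\<in>F. prime p \<and> odd p"
  shows "(\<Sum>p\<in>F. \<Sum>k\<in>{1..K}. ln (real p) * (real p powr (- s)) ^ k)
      * (\<Sum>j<J. (2 * real j + 1) powr (- s)) \<le> odd_log_zeta s"
proof -
  let ?S = "F \<times> {1..K} \<times> {..<J}"
  let ?h = "\<lambda>x. ln (real (fst x)) * real (odd_factor_product x) powr (- s)"
  have p_pos: "0 < p" if "p \<in> F" for p
    using assms(3) that prime_gt_0_nat by blast
  have h: "real (odd_factor_product (p, k, j)) powr (- s) = (real p powr (- s)) ^ k * (2 * real j + 1) powr (- s)"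
    if "p \<in> F" for p k j
  proof -
    have "real (odd_factor_product (p, k, j)) = real p ^ k * (2 * real j + 1)"
      by (simp add: odd_factor_product_def algebra_simps)
    then show ?thesis
      using p_pos[OF that] by (simp add: powr_mult power_powr)
  qed
  have "(\<Sum>p\<in>F. \<Sum>k\<in>{1..K}. ln (real p) * (real p powr (- s)) ^ k) * (\<Sum>j<J. (2 * real j + 1) powr (- s))
      = (\<Sum>p\<in>F. \<Sum>k\<in>{1..K}. \<Sum>j<J. ln (real p) * (real p powr (- s)) ^ k * (2 * real j + 1) powr (- s))"
    unfolding sum_distrib_right by (simp only: sum_distrib_left)
  also have "\<dots> = (\<Sum>x\<in>?S. ?h x)"
    unfolding sum.cartesian_product by (rule sum.cong) (auto simp: h)
  also have "\<dots> = (\<Sum>n\<in>odd_factor_product ` ?S. \<Sum>x\<in>{x \<in> ?S. odd_factor_product x = n}. ?h x)"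
    using assms(2) by (intro sum.group[symmetric]) auto
  also have "\<dots> \<le> (\<Sum>n\<in>odd_factor_product ` ?S. ln (real n) * real n powr (- s))"
  proof (intro sum_mono)
    fix n
    assume "n \<in> odd_factor_product ` ?S"
    then have "0 < n"
      by (auto simp: odd_factor_product_def dest: p_pos)
    have "(\<Sum>x\<in>{x \<in> ?S. odd_factor_product x = n}. ?h x)
        = (\<Sum>x\<in>{x \<in> ?S. odd_factor_product x = n}. ln (real (fst x))) * real n powr (- s)"
      by (simp add: sum_distrib_right)
    also have "\<dots> \<le> ln (real n) * real n powr (- s)"
      using assms(2,3) \<open>0 < n\<close> by (intro mult_right_mono fibre_sum_ln_le) auto
    finally show "(\<Sum>x\<in>{x \<in> ?S. odd_factor_product x = n}. ?h x) \<le> ln (real n) * real n powr (- s)" .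
  qed
  also have "\<dots> \<le> odd_log_zeta s"
    using assms by (intro sum_odd_le_odd_log_zeta) (auto simp: odd_factor_product_def)
  finally show ?thesis .
qed

lemma geometric_tail_sum_tendsto:
  fixes q :: real
  assumes "\<bar>q\<bar> < 1"
  shows "(\<lambda>K. \<Sum>k\<in>{1..K}. q ^ k) \<longlonglongrightarrow> q / (1 - q)"
proof -
  have "(\<Sum>k\<in>{1..K}. q ^ k) = q * (\<Sum>k<K. q ^ k)" for K
    by (induction K) (simp_all add: atLeastAtMostSuc_conv algebra_simps)
  moreover have "(\<lambda>K. q * (\<Sum>k<K. q ^ k)) \<longlonglongrightarrow> q * (1 / (1 - q))"
    using geometric_sums[of q] assms by (intro tendsto_mult_left) (simp add: sums_def)
  ultimately show ?thesis
    by simp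
qed

lemma log_sum_times_odd_zeta_le:
  fixes s :: real
  assumes "1 < s" "finite F" "\<forall>p\<in>F. prime p \<and> odd p"
  shows "(\<Sum>p\<in>F. ln (real p) / (real p powr s - 1)) * odd_zeta s \<le> odd_log_zeta s"
proof (rule LIMSEQ_le_const2)
  have "(\<lambda>K. \<Sum>k\<in>{1..K}. ln (real p) * (real p powr (- s)) ^ k) \<longlonglongrightarrow> ln (real p) / (real p powr s - 1)"
    if "p \<in> F" for p
  proof -
    have "1 < real p"
      using that assms(3) prime_gt_1_nat by auto
    then have "1 < real p powr s"
      using assms(1) by (intro gr_one_powr) auto
    moreover have q: "real p powr (- s) = 1 / real p powr s"
      by (rule powr_minus_divide)
    ultimately have "(\<lambda>K. ln (real p) * (\<Sum>k\<in>{1..K}. (real p powr (- s)) ^ k))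
        \<longlonglongrightarrow> ln (real p) * (real p powr (- s) / (1 - real p powr (- s)))"
      by (intro tendsto_mult_left geometric_tail_sum_tendsto) (auto simp: divide_less_eq_1)
    moreover have "real p powr (- s) / (1 - real p powr (- s)) = 1 / (real p powr s - 1)"
      using \<open>1 < real p powr s\<close> \<open>1 < real p\<close> unfolding q by (simp add: field_simps)
    ultimately show ?thesis
      by (simp add: sum_distrib_left)
  qed
  then have "(\<lambda>K. \<Sum>p\<in>F. \<Sum>k\<in>{1..K}. ln (real p) * (real p powr (- s)) ^ k)
      \<longlonglongrightarrow> (\<Sum>p\<in>F. ln (real p) / (real p powr s - 1))"
    by (rule tendsto_sum)
  moreover have "(\<lambda>J. \<Sum>j<J. (2 * real j + 1) powr (- s)) \<longlonglongrightarrow> odd_zeta s"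
    unfolding odd_zeta_def using summable_odd_powr(1)[OF assms(1)] by (rule summable_LIMSEQ)
  ultimately show "(\<lambda>n. (\<Sum>p\<in>F. \<Sum>k\<in>{1..n}. ln (real p) * (real p powr (- s)) ^ k)
      * (\<Sum>j<n. (2 * real j + 1) powr (- s)))
      \<longlonglongrightarrow> (\<Sum>p\<in>F. ln (real p) / (real p powr s - 1)) * odd_zeta s"
    by (rule tendsto_mult)
  show "\<exists>N. \<forall>n\<ge>N. (\<Sum>p\<in>F. \<Sum>k\<in>{1..n}. ln (real p) * (real p powr (- s)) ^ k)
      * (\<Sum>j<n. (2 * real j + 1) powr (- s)) \<le> odd_log_zeta s"
    using truncated_log_sum_times_odd_zeta_le[OF assms] by blast
qed

section \<open>The excess terms\<close>

lemma excess_eq: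
  fixes P u :: real
  assumes "3 \<le> P" "0 \<le> u"
  shows "ln P / ((P - 2) * P powr u) - ln P / (P powr (1 + u) - 1)
    = ln P * (2 * P powr u - 1) / ((P - 2) * P powr u * (P * P powr u - 1))"
proof -
  have "1 \<le> P powr u"
    using assms by (intro ge_one_powr_ge_zero) auto
  moreover have "P powr (1 + u) = P * P powr u"
    using assms by (simp add: powr_add)
  moreover have "3 * 1 \<le> P * P powr u"
    using assms \<open>1 \<le> P powr u\<close> by (intro mult_mono) auto
  ultimately show ?thesis
    using assms by (simp add: field_simps)
qed

lemma excess_three_eq:
  fixes u :: real
  assumes "0 \<le> u"
  shows "ln 3 / ((3 - 2) * 3 powr u) - ln 3 / (3 powr (1 + u) - 1)
    = ln 3 * (3 powr (- u) * (2 - 3 powr (- u)) / (3 - 3 powr (- u)))"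
proof -
  have "1 \<le> (3::real) powr u"
    using assms by (intro ge_one_powr_ge_zero) auto
  then show ?thesis
    using excess_eq[of 3 u] assms by (simp add: powr_minus_divide field_simps)
qed

lemma excess_factor_antimono:
  fixes P x y :: real
  assumes "3 \<le> P" "1 \<le> y" "y \<le> x"
  shows "(2 * x - 1) / (x * (P * x - 1)) \<le> (2 * y - 1) / (y * (P * y - 1))"
proof -
  have "0 \<le> (x - y) * (P * (x * (y - 1) + y * (x - 1)) + 1)"
    using assms by (intro mult_nonneg_nonneg add_nonneg_nonneg) auto
  then have "(2 * x - 1) * (y * (P * y - 1)) \<le> (2 * y - 1) * (x * (P * x - 1))"
    by (simp add: algebra_simps)
  moreover have "3 * 1 \<le> P * y" "3 * 1 \<le> P * x"
    using assms by (intro mult_mono; simp)+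
  ultimately show ?thesis
    using assms by (simp add: divide_simps)
qed

lemma excess_le:
  fixes P u :: real
  assumes "3 \<le> P" "0 \<le> u"
  shows "ln P / ((P - 2) * P powr u) - ln P / (P powr (1 + u) - 1)
    \<le> ln P / ((P - 1) * (P - 2)) * (2 * 3 powr (- u) - (3 powr (- u))\<^sup>2)"
proof -
  define x where "x = P powr u"
  define y where "y = (3::real) powr u"
  have y: "1 \<le> y" "y \<le> x"
    unfolding x_def y_def using assms by (auto intro: ge_one_powr_ge_zero powr_mono2)
  have "(2 * x - 1) / (x * (P * x - 1)) \<le> (2 * y - 1) / (y * (P * y - 1))"
    using assms(1) y by (rule excess_factor_antimono)
  also have "\<dots> \<le> (2 * y - 1) / ((P - 1) * y\<^sup>2)"
  proof (rule divide_left_mono)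
    show "(P - 1) * y\<^sup>2 \<le> y * (P * y - 1)"
      using y by (simp add: algebra_simps power2_eq_square)
    have "3 * 1 \<le> P * y"
      using assms y by (intro mult_mono) auto
    then show "0 < y * (P * y - 1) * ((P - 1) * y\<^sup>2)"
      using assms y by (intro mult_pos_pos) auto
  qed (use y in simp)
  finally have "ln P / (P - 2) * ((2 * x - 1) / (x * (P * x - 1)))
      \<le> ln P / (P - 2) * ((2 * y - 1) / ((P - 1) * y\<^sup>2))"
    using assms by (intro mult_left_mono) auto
  moreover have "(2 * y - 1) / y\<^sup>2 = 2 * 3 powr (- u) - (3 powr (- u))\<^sup>2"
    using y by (simp add: y_def powr_minus_divide field_simps power2_eq_square)
  moreover have "ln P / ((P - 1) * (P - 2)) * ((2 * y - 1) / y\<^sup>2)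
      = ln P / (P - 2) * ((2 * y - 1) / ((P - 1) * y\<^sup>2))"
    by (simp add: mult_ac)
  moreover have "ln P * (2 * x - 1) / ((P - 2) * x * (P * x - 1))
      = ln P / (P - 2) * ((2 * x - 1) / (x * (P * x - 1)))"
    by (simp add: mult_ac)
  ultimately show ?thesis
    unfolding excess_eq[OF assms] by (simp add: x_def)
qed

lemma ln_div_square_antimono:
  fixes x y :: real
  assumes "3 \<le> x" "x \<le> y"
  shows "ln y / (y - 2)\<^sup>2 \<le> ln x / (x - 2)\<^sup>2"
proof -
  have "ln y / y \<le> ln x / x"
    using assms exp_le by (intro ln_x_over_x_mono) auto
  moreover have "y / (y - 2)\<^sup>2 \<le> x / (x - 2)\<^sup>2"
  proof -
    have "0 \<le> (y - x) * (x * y - 4)"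
      using assms mult_mono[of 3 x 3 y] by (intro mult_nonneg_nonneg) auto
    then have "y * (x - 2)\<^sup>2 \<le> x * (y - 2)\<^sup>2"
      by (simp add: algebra_simps power2_eq_square)
    then show ?thesis
      using assms by (simp add: divide_simps)
  qed
  moreover have "0 \<le> ln x / x" "0 \<le> y / (y - 2)\<^sup>2"
    using assms by auto
  ultimately have "ln y / y * (y / (y - 2)\<^sup>2) \<le> ln x / x * (x / (x - 2)\<^sup>2)"
    by (intro mult_mono) auto
  then show ?thesis
    using assms by simp
qed

definition log_weight :: "nat \<Rightarrow> real" where
  "log_weight n = ln (real n) / ((real n - 1) * (real n - 2))"

lemma log_weight_nonneg: "0 \<le> log_weight n"
proof (cases "3 \<le> n")
  case True
  then show ?thesis
    unfolding log_weight_def by (intro divide_nonneg_pos) auto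
next
  case False
  then have "n = 0 \<or> n = 1 \<or> n = 2"
    by auto
  then show ?thesis
    by (auto simp: log_weight_def)
qed

lemma log_weight_le: "3 \<le> n \<Longrightarrow> log_weight n \<le> ln (real n) / (real n - 2)\<^sup>2"
  unfolding log_weight_def power2_eq_square by (intro divide_left_mono mult_right_mono) auto

lemma ln_plus_one_div_antiderivative:
  fixes x :: real
  assumes "2 < x"
  shows "((\<lambda>x. (ln x + 1) / (x - 2)) has_real_derivative - ((ln x + 2 / x) / (x - 2)\<^sup>2)) (at x)"
  using assms by (auto intro!: derivative_eq_intros simp: field_simps power2_eq_square minus_divide_left)

lemma log_weight_pair_le:
  assumes "1 \<le> j"
  shows "log_weight (6 * j + 5) + log_weight (6 * j + 7)
    \<le> ((ln (6 * real j - 1) + 1) / (6 * real j - 3) - (ln (6 * real j + 5) + 1) / (6 * real j + 3)) / 3"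
proof -
  let ?g = "\<lambda>x. ln x / (x - 2)\<^sup>2"
  have "log_weight (6 * j + 5) + log_weight (6 * j + 7) \<le> ?g (6 * real j + 5) + ?g (6 * real j + 7)"
    using log_weight_le[of "6 * j + 5"] log_weight_le[of "6 * j + 7"] by (simp add: add_mono)
  also have "\<dots> \<le> 2 * ?g (6 * real j + 5)"
    using ln_div_square_antimono[of "6 * real j + 5" "6 * real j + 7"] by simp
  finally have "log_weight (6 * j + 5) + log_weight (6 * j + 7) \<le> 2 * ?g (6 * real j + 5)" .
  moreover have "(6 * real j + 5 - (6 * real j - 1)) * ?g (6 * real j + 5)
      \<le> (ln (6 * real j - 1) + 1) / (6 * real j - 1 - 2) - (ln (6 * real j + 5) + 1) / (6 * real j + 5 - 2)"
  proof (rule antiderivative_diff_ge)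
    fix x
    assume x: "6 * real j - 1 \<le> x" "x \<le> 6 * real j + 5"
    then show "((\<lambda>x. (ln x + 1) / (x - 2)) has_real_derivative - ((ln x + 2 / x) / (x - 2)\<^sup>2)) (at x)"
      using assms by (intro ln_plus_one_div_antiderivative) auto
    have "?g (6 * real j + 5) \<le> ?g x"
      using assms x by (intro ln_div_square_antimono) auto
    also have "\<dots> \<le> (ln x + 2 / x) / (x - 2)\<^sup>2"
      using assms x by (intro divide_right_mono) auto
    finally show "?g (6 * real j + 5) \<le> (ln x + 2 / x) / (x - 2)\<^sup>2" .
  qed simp
  ultimately show ?thesis
    by (simp add: algebra_simps)
qed

lemma prime_mod_6_cases:
  fixes p :: nat
  assumes "prime p" "5 \<le> p"
  obtains j where "p = 6 * j + 5" | j where "p = 6 * j + 7"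
proof -
  have "\<not> 2 dvd p" "\<not> 3 dvd p"
    using assms primes_dvd_imp_eq[of 2 p] primes_dvd_imp_eq[of 3 p] by auto
  then have "p mod 6 = 5 \<or> p mod 6 = 1"
    by presburger
  then consider "p mod 6 = 5" | "p mod 6 = 1"
    by blast
  then show ?thesis
  proof cases
    case 1
    then show ?thesis
      by (intro that(1)[of "p div 6"]) presburger
  next
    case 2
    then show ?thesis
      using assms(2) by (intro that(2)[of "p div 6 - 1"]) presburger
  qed
qed

lemma log_weight_head_le:
  "(\<Sum>j<5. log_weight (6 * j + 5) + log_weight (6 * j + 7)) + (ln 29 + 1) / 81 \<le> (0.3416::real)"
proof -
  have "ln (25::real) = 2 * ln 5"
    using ln_realpow[of 5 2] by simp
  then have "(\<Sum>j<5. log_weight (6 * j + 5) + log_weight (6 * j + 7)) + (ln 29 + 1) / 81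
    = ln 5 / 12 + ln 7 / 30 + ln 11 / 90 + ln 13 / 132 + ln 17 / 240 + ln 19 / 306 + ln 23 / 462
      + 2 * ln 5 / 552 + ln 29 / 756 + ln 31 / 870 + (ln 29 + 1) / (81::real)"
    by (simp add: numeral_eq_Suc log_weight_def)
  also have "\<dots> \<le> 0.3416"
    using ln_small_primes_le by (simp add: field_simps)
  finally show ?thesis .
qed

lemma sum_log_weight_pairs_le:
  assumes "5 \<le> M"
  shows "(\<Sum>j\<in>{5..<M}. log_weight (6 * j + 5) + log_weight (6 * j + 7)) \<le> (ln 29 + 1) / 81"
proof -
  let ?\<Phi> = "\<lambda>j. (ln (6 * real j - 1) + 1) / (6 * real j - 3) / 3"
  have "(\<Sum>j\<in>{5..<M}. log_weight (6 * j + 5) + log_weight (6 * j + 7))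
      \<le> (\<Sum>j\<in>{5..<M}. ?\<Phi> j - ?\<Phi> (Suc j))"
    using log_weight_pair_le by (intro sum_mono) (auto simp: diff_divide_distrib algebra_simps)
  also have "\<dots> = ?\<Phi> 5 - ?\<Phi> M"
    using sum_Suc_diff'[OF assms, of "\<lambda>j. - ?\<Phi> j"] by simp
  also have "\<dots> \<le> (ln 29 + 1) / 81"
  proof -
    have "0 \<le> ?\<Phi> M"
      using assms by (intro divide_nonneg_nonneg add_nonneg_nonneg) auto
    moreover have "?\<Phi> 5 = (ln 29 + 1) / 81"
      by simp
    ultimately show ?thesis
      by linarith
  qed
  finally show ?thesis .
qed

lemma sum_log_weight_primes_le:
  assumes "finite F" "\<forall>p\<in>F. prime p \<and> 5 \<le> p"
  shows "(\<Sum>p\<in>F. log_weight p) \<le> 0.3416"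
proof -
  define M where "M = Suc (Max (insert 5 F))"
  let ?pair = "\<lambda>j. log_weight (6 * j + 5) + log_weight (6 * j + 7)"
  have "5 \<le> Max (insert 5 F)"
    using assms(1) by (intro Max_ge) auto
  then have "5 \<le> M"
    by (simp add: M_def)
  have "p < M" if "p \<in> F" for p
    using that assms(1) by (simp add: M_def le_imp_less_Suc)
  then have "F \<subseteq> (\<lambda>j. 6 * j + 5) ` {..<M} \<union> (\<lambda>j. 6 * j + 7) ` {..<M}"
    using assms(2) by (fastforce elim!: prime_mod_6_cases)
  then have "(\<Sum>p\<in>F. log_weight p) \<le> (\<Sum>p\<in>(\<lambda>j. 6 * j + 5) ` {..<M} \<union> (\<lambda>j. 6 * j + 7) ` {..<M}. log_weight p)"
    by (intro sum_mono2) (auto simp: log_weight_nonneg)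
  also have "\<dots> = (\<Sum>p\<in>(\<lambda>j. 6 * j + 5) ` {..<M}. log_weight p) + (\<Sum>p\<in>(\<lambda>j. 6 * j + 7) ` {..<M}. log_weight p)"
    by (rule sum.union_disjoint) (auto dest: arg_cong[where f = "\<lambda>n. n mod 6"])
  also have "\<dots> = (\<Sum>j<M. ?pair j)"
    by (simp add: sum.reindex inj_on_def sum.distrib)
  also have "\<dots> = (\<Sum>j<5. ?pair j) + (\<Sum>j\<in>{5..<M}. ?pair j)"
    using sum.atLeastLessThan_concat[of 0 5 M ?pair] \<open>5 \<le> M\<close> by (simp add: atLeast0LessThan)
  also have "\<dots> \<le> 0.3416"
    using sum_log_weight_pairs_le[OF \<open>5 \<le> M\<close>] log_weight_head_le by linarith
  finally show ?thesis .
qed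

definition excess_bound :: "real \<Rightarrow> real" where
  "excess_bound t = ln 3 * (t * (2 - t) / (3 - t)) + 0.3416 * (2 * t - t\<^sup>2)"

lemma sum_excess_le:
  fixes u :: real
  assumes "0 \<le> u" "finite F" "\<forall>p\<in>F. prime p \<and> 3 \<le> p"
  shows "(\<Sum>p\<in>F. ln (real p) / ((real p - 2) * real p powr u) - ln (real p) / (real p powr (1 + u) - 1))
    \<le> excess_bound (3 powr (- u))"
proof -
  define t where "t = (3::real) powr (- u)"
  let ?e = "\<lambda>p. ln (real p) / ((real p - 2) * real p powr u) - ln (real p) / (real p powr (1 + u) - 1)"
  have t: "0 < t" "t \<le> 1"
    using assms(1) powr_mono[of "- u" 0 3] by (auto simp: t_def)
  have large: "prime p \<and> 5 \<le> p" if "p \<in> F - {3}" for p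
  proof -
    have "prime p" "odd p" "3 < p"
      using that assms(3) prime_odd_nat[of p] by auto
    then show ?thesis
      by presburger
  qed
  have "(\<Sum>p\<in>F \<inter> {3}. ?e p) \<le> ln 3 * (t * (2 - t) / (3 - t))"
    using excess_three_eq[OF assms(1)] t by (cases "3 \<in> F") (auto simp: t_def)
  moreover have "(\<Sum>p\<in>F - {3}. ?e p) \<le> (\<Sum>p\<in>F - {3}. log_weight p) * (2 * t - t\<^sup>2)"
    unfolding sum_distrib_right
  proof (intro sum_mono)
    fix p
    assume "p \<in> F - {3}"
    then have "3 \<le> real p"
      using large[of p] by simp
    then show "?e p \<le> log_weight p * (2 * t - t\<^sup>2)"
      using excess_le[of "real p" u] assms(1) by (simp add: log_weight_def t_def)
  qed
  moreover have "(\<Sum>p\<in>F - {3}. log_weight p) * (2 * t - t\<^sup>2) \<le> 0.3416 * (2 * t - t\<^sup>2)"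
    using sum_log_weight_primes_le[of "F - {3}"] assms(2) large t
    by (intro mult_right_mono) (auto simp: power2_eq_square)
  moreover have "(\<Sum>p\<in>F. ?e p) = (\<Sum>p\<in>F \<inter> {3}. ?e p) + (\<Sum>p\<in>F - {3}. ?e p)"
    using assms(2) by (rule sum.Int_Diff)
  ultimately show ?thesis
    unfolding excess_bound_def t_def[symmetric] by linarith
qed

lemma excess_bound_nonneg:
  fixes t :: real
  assumes "0 \<le> t" "t \<le> 1"
  shows "0 \<le> excess_bound t"
proof -
  have "0 \<le> t * (2 - t)"
    using assms by simp
  then have "0 \<le> ln 3 * (t * (2 - t) / (3 - t))"
    using assms by (intro mult_nonneg_nonneg divide_nonneg_pos) auto
  moreover have "0 \<le> 0.3416 * (2 * t - t\<^sup>2)"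
    using \<open>0 \<le> t * (2 - t)\<close> by (simp add: algebra_simps power2_eq_square)
  ultimately show ?thesis
    unfolding excess_bound_def by (rule add_nonneg_nonneg)
qed

section \<open>The numerical inequality\<close>

(* 0.2745 = 1.098 / 4, and 1.098 is a lower bound for ln 3. *)
lemma three_powr_neg_le_Taylor:
  fixes a :: real
  assumes "0 \<le> a"
  shows "3 powr (- a) \<le> 1 / (\<Sum>m<6. (a * 0.2745) ^ m / fact m) ^ 4"
proof -
  have pos: "0 < (\<Sum>m<6. (a * 0.2745) ^ m / fact m)"
    using assms by (simp add: numeral_eq_Suc add_pos_nonneg)
  have "(\<Sum>m<6. (a * 0.2745) ^ m / fact m) ^ 4 \<le> exp (a * 0.2745) ^ 4"
    using assms pos by (intro power_mono exp_lower_Taylor) auto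
  also have "\<dots> = exp (a * 1.098)"
    by (simp add: exp_of_nat_mult[symmetric])
  also have "\<dots> \<le> 3 powr a"
    using mult_left_mono[OF ln_3_bounds(1) assms] by (simp add: powr_def mult.commute)
  finally show ?thesis
    using pos by (simp add: powr_minus_divide divide_left_mono)
qed

lemma excess_bound_le:
  fixes t T :: real
  assumes "0 \<le> t" "t \<le> T" "T \<le> 1"
  shows "excess_bound t \<le> 1.0988 * (T * (2 - T) / (3 - T)) + 0.3416 * (2 * T - T\<^sup>2)"
proof -
  have "0 \<le> (T - t) * (6 - 3 * (T + t) + T * t)"
    using assms by (intro mult_nonneg_nonneg) auto
  then have "t * (2 - t) * (3 - T) \<le> T * (2 - T) * (3 - t)"
    by (simp add: algebra_simps)
  then have "t * (2 - t) / (3 - t) \<le> T * (2 - T) / (3 - T)"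
    using assms by (simp add: divide_simps)
  moreover have "0 \<le> t * (2 - t) / (3 - t)"
    using assms by simp
  ultimately have "ln 3 * (t * (2 - t) / (3 - t)) \<le> 1.0988 * (T * (2 - T) / (3 - T))"
    using ln_3_bounds(2) by (intro mult_mono) auto
  moreover have "0 \<le> (T - t) * (2 - T - t)"
    using assms by (intro mult_nonneg_nonneg) auto
  then have "2 * t - t\<^sup>2 \<le> 2 * T - T\<^sup>2"
    by (simp add: algebra_simps power2_eq_square)
  then have "0.3416 * (2 * t - t\<^sup>2) \<le> 0.3416 * (2 * T - T\<^sup>2)"
    by simp
  ultimately show ?thesis
    unfolding excess_bound_def by linarith
qed

lemma zeta_gap_bound_ge:
  fixes u b t T :: real
  assumes "0 \<le> u" "u \<le> b" "0 \<le> t" "t \<le> T"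
  shows "1 + T * ((1 - b * 1.0988) / 3 - 1.6096 / 2) \<le> zeta_gap_bound u t"
proof -
  have "u * ln 3 \<le> b * 1.0988"
    using assms ln_3_bounds(2) by (intro mult_mono) auto
  then have "(1 - b * 1.0988) / 3 - 1.6096 / 2 \<le> (1 - u * ln 3) / 3 - ln 5 / 2"
    using ln_small_primes_le(1) by (simp add: field_simps)
  moreover have "(1 - b * 1.0988) / 3 - 1.6096 / 2 \<le> 0"
    using assms by simp
  ultimately have "T * ((1 - b * 1.0988) / 3 - 1.6096 / 2) \<le> t * ((1 - u * ln 3) / 3 - ln 5 / 2)"
    using assms by (meson mult_left_mono mult_right_mono_neg order_trans)
  moreover have "t * ((1 - u * ln 3) / 3 - ln 5 / 2) = t / 3 * (1 - u * ln 3) - t * ln 5 / 2"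
    by (simp add: field_simps)
  ultimately show ?thesis
    unfolding zeta_gap_bound_def by linarith
qed

(* By three_powr_neg_le_Taylor the third conjunct gives 3 powr -u <= T for all u in [a, b]; the last
   one is the numerical inequality with u, t, ln 3, ln 5 replaced by their worst cases b, T, 1.0988,
   1.6096. *)
definition interval_certificate :: "real \<Rightarrow> real \<Rightarrow> real \<Rightarrow> bool" where
  "interval_certificate a b T \<longleftrightarrow> 0 \<le> a \<and> T \<le> 1 \<and> 1 / (\<Sum>m<6. (a * 0.2745) ^ m / fact m) ^ 4 \<le> T
    \<and> (b + b * T / 3 + T / 2) * (1.0988 * (T * (2 - T) / (3 - T)) + 0.3416 * (2 * T - T\<^sup>2))
        \<le> 1 + T * ((1 - b * 1.0988) / 3 - 1.6096 / 2)"

lemma interval_certificate_sound: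
  fixes a b T u :: real
  assumes "interval_certificate a b T" "a \<le> u" "u \<le> b"
  shows "(u + u * 3 powr (- u) / 3 + 3 powr (- u) / 2) * excess_bound (3 powr (- u))
    \<le> zeta_gap_bound u (3 powr (- u))"
proof -
  define t where "t = (3::real) powr (- u)"
  have cert: "0 \<le> a" "T \<le> 1" "3 powr (- a) \<le> T"
    "(b + b * T / 3 + T / 2) * (1.0988 * (T * (2 - T) / (3 - T)) + 0.3416 * (2 * T - T\<^sup>2))
      \<le> 1 + T * ((1 - b * 1.0988) / 3 - 1.6096 / 2)"
    using assms(1) three_powr_neg_le_Taylor[of a] unfolding interval_certificate_def by auto
  have "3 powr (- u) \<le> 3 powr (- a)"
    using assms(2) by (intro powr_mono) auto
  then have t: "0 < t" "t \<le> T"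
    using order_trans[OF _ cert(3)] by (auto simp: t_def)
  have "0 \<le> excess_bound t"
    using t cert(2) by (intro excess_bound_nonneg) auto
  moreover have "u + u * t / 3 + t / 2 \<le> b + b * T / 3 + T / 2"
    using assms(2,3) cert(1) t mult_mono[of u b t T] by simp
  moreover have "excess_bound t \<le> 1.0988 * (T * (2 - T) / (3 - T)) + 0.3416 * (2 * T - T\<^sup>2)"
    using t cert(2) by (intro excess_bound_le) auto
  moreover have "0 \<le> u + u * t / 3 + t / 2"
    using assms(2) cert(1) t by simp
  ultimately have "(u + u * t / 3 + t / 2) * excess_bound t
      \<le> (b + b * T / 3 + T / 2) * (1.0988 * (T * (2 - T) / (3 - T)) + 0.3416 * (2 * T - T\<^sup>2))"
    by (intro mult_mono) auto
  also have "\<dots> \<le> zeta_gap_bound u t"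
    using cert(4) zeta_gap_bound_ge[of u b t T] assms(2,3) cert(1) t by linarith
  finally show ?thesis
    by (simp add: t_def)
qed

fun certified_chain :: "(real \<Rightarrow> real \<Rightarrow> real \<Rightarrow> bool) \<Rightarrow> real \<Rightarrow> (real \<times> real) list \<Rightarrow> bool" where
  "certified_chain C a [] \<longleftrightarrow> True"
| "certified_chain C a ((b, T) # cs) \<longleftrightarrow> C a b T \<and> certified_chain C b cs"

lemma certified_chain_cover:
  assumes "\<And>a b T u. C a b T \<Longrightarrow> a \<le> u \<Longrightarrow> u \<le> b \<Longrightarrow> P u"
    and "certified_chain C a cs" "cs \<noteq> []" "a \<le> u" "u \<le> last (a # map fst cs)"
  shows "P u"
  using assms(2-)
proof (induction cs arbitrary: a)
  case Nil
  then show ?case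
    by simp
next
  case (Cons c cs)
  obtain b T where c: "c = (b, T)"
    by fastforce
  show ?case
  proof (cases "u \<le> b")
    case True
    then show ?thesis
      using Cons.prems c assms(1) by auto
  next
    case False
    with Cons.prems c have "cs \<noteq> []"
      by auto
    with False show ?thesis
      using Cons.prems Cons.IH[of b] c by auto
  qed
qed

definition chain_0_to_2 :: "(real \<times> real) list" where
  "chain_0_to_2 =
    [(0.052, 1), (0.094, 0.94451), (0.129, 0.90194), (0.159, 0.86794), (0.186, 0.83981),
     (0.211, 0.81528), (0.234, 0.79321), (0.256, 0.77343), (0.277, 0.75497), (0.298, 0.73776),
     (0.319, 0.72094), (0.34, 0.70451), (0.362, 0.68845), (0.386, 0.67202), (0.412, 0.65454),
     (0.44, 0.63612), (0.472, 0.61686), (0.509, 0.59556), (0.554, 0.57185), (0.61, 0.54428),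
     (0.683, 0.51183), (0.783, 0.4724), (0.933, 0.42328), (1.187, 0.35901), (1.713, 0.27163),
     (2, 0.15247)]"

lemma exp_Taylor_6_eq:
  fixes x :: real
  shows "(\<Sum>m<6. x ^ m / fact m) = 1 + x + x\<^sup>2 / 2 + x ^ 3 / 6 + x ^ 4 / 24 + x ^ 5 / 120"
  by (simp add: numeral_eq_Suc)

lemma chain_0_to_2_certified: "certified_chain interval_certificate 0 chain_0_to_2"
  unfolding chain_0_to_2_def certified_chain.simps interval_certificate_def exp_Taylor_6_eq
  by (simp add: power_divide)

lemma excess_bound_le_linear:
  fixes t :: real
  assumes "0 \<le> t" "t \<le> 1"
  shows "excess_bound t \<le> 1.8 * t"
proof -
  have "t * (2 - t) \<le> t * (3 - t)"
    using assms by (intro mult_left_mono) auto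
  then have "t * (2 - t) / (3 - t) \<le> t"
    using assms by (simp add: divide_simps)
  then have "ln 3 * (t * (2 - t) / (3 - t)) \<le> 1.0988 * t"
    using assms ln_3_bounds(2) by (intro mult_mono) auto
  moreover have "0 \<le> t * t"
    using assms by simp
  then have "0.3416 * (2 * t - t\<^sup>2) \<le> 0.7 * t"
    using assms by (simp add: power2_eq_square; linarith)
  ultimately have "excess_bound t \<le> 1.0988 * t + 0.7 * t"
    unfolding excess_bound_def by (rule add_mono)
  then show ?thesis
    using assms by simp
qed

lemma u_times_three_powr_neg_le:
  fixes u :: real
  assumes "2 \<le> u"
  shows "u * 3 powr (- u) \<le> 2 / 9"
proof -
  have "1 + (u - 2) * 1 \<le> 1 + (u - 2) * ln 3"
    using assms ln3_gt_1 by (intro add_left_mono mult_left_mono) auto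
  also have "\<dots> \<le> 3 powr (u - 2)"
    using exp_ge_add_one_self[of "(u - 2) * ln 3"] by (simp add: powr_def mult.commute)
  finally have "u / 2 \<le> 3 powr (u - 2)"
    using assms by simp
  have "u * 3 powr (- u) = u / (9 * 3 powr (u - 2))"
    by (simp add: powr_diff powr_minus_divide)
  also have "\<dots> \<le> u / (9 * (u / 2))"
    using \<open>u / 2 \<le> 3 powr (u - 2)\<close> assms by (intro divide_left_mono mult_left_mono) auto
  also have "\<dots> = 2 / 9"
    using assms by simp
  finally show ?thesis .
qed

lemma excess_bound_le_zeta_gap_bound_large:
  fixes u :: real
  assumes "2 \<le> u"
  shows "(u + u * 3 powr (- u) / 3 + 3 powr (- u) / 2) * excess_bound (3 powr (- u))
    \<le> zeta_gap_bound u (3 powr (- u))"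
proof -
  define t where "t = (3::real) powr (- u)"
  have t: "0 < t" "t \<le> 1 / 9"
    using assms powr_mono[of "- u" "- 2" 3] by (auto simp: t_def powr_minus_divide)
  have ut: "u * t \<le> 2 / 9"
    using u_times_three_powr_neg_le[OF assms] by (simp add: t_def)
  have "excess_bound t \<le> 1.8 * t"
    using t by (intro excess_bound_le_linear) auto
  then have "(u + u * t / 3 + t / 2) * excess_bound t \<le> (u + u * t / 3 + t / 2) * (1.8 * t)"
    using assms t by (intro mult_left_mono) auto
  also have "\<dots> = 1.8 * (u * t) + 0.6 * (u * t) * t + 0.9 * t * t"
    by (simp add: algebra_simps)
  also have "\<dots> \<le> 1.8 * (2 / 9) + 0.6 * (2 / 9) * (1 / 9) + 0.9 * (1 / 9) * (1 / 9)"
    using ut t assms by (intro add_mono mult_mono) auto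
  also have "\<dots> \<le> zeta_gap_bound u t"
  proof -
    have "(u * t) * ln 3 \<le> (2 / 9) * 1.0988"
      using ut t assms ln_3_bounds(2) by (intro mult_mono) auto
    moreover have "t * ln 5 \<le> (1 / 9) * 1.6096"
      using t ln_small_primes_le(1) by (intro mult_mono) auto
    ultimately show ?thesis
      using t unfolding zeta_gap_bound_def by (simp add: algebra_simps)
  qed
  finally show ?thesis
    by (simp add: t_def)
qed

lemma excess_bound_le_zeta_gap_bound:
  fixes u :: real
  assumes "0 < u"
  shows "(u + u * 3 powr (- u) / 3 + 3 powr (- u) / 2) * excess_bound (3 powr (- u))
    \<le> zeta_gap_bound u (3 powr (- u))"
proof (cases "u \<le> 2")
  case True
  show ?thesis
    using interval_certificate_sound chain_0_to_2_certified
  proof (rule certified_chain_cover)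
    show "chain_0_to_2 \<noteq> []" "0 \<le> u" "u \<le> last (0 # map fst chain_0_to_2)"
      using assms True by (simp_all add: chain_0_to_2_def)
  qed
next
  case False
  then show ?thesis
    by (intro excess_bound_le_zeta_gap_bound_large) simp
qed

lemma sum_bound_from_zeta_bounds:
  fixes u t A D E G L Z :: real
  assumes "0 < u" "1 \<le> Z" "Z \<le> 1 + t / 3 + t / (2 * u)" "A * Z \<le> L"
    and "D \<le> E" "0 \<le> E" "(u + u * t / 3 + t / 2) * E \<le> G" "G \<le> Z - u * L"
  shows "u * (A + D) \<le> 1"
proof -
  have "D * Z \<le> E * (1 + t / 3 + t / (2 * u))"
    using assms(2,3,5,6) by (intro mult_mono) auto
  then have "u * (A * Z) + u * (D * Z) \<le> u * L + u * (E * (1 + t / 3 + t / (2 * u)))"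
    using assms(1,4) by (intro add_mono mult_left_mono) auto
  also have "u * (E * (1 + t / 3 + t / (2 * u))) = (u + u * t / 3 + t / 2) * E"
    using assms(1) by (simp add: field_simps)
  finally have "u * (A + D) * Z \<le> 1 * Z"
    using assms(7,8) by (simp add: algebra_simps)
  then show ?thesis
    using assms(2) by simp
qed

lemma finite_partial_sum_le:
  fixes u :: real
  assumes "0 < u" "finite F" "F \<subseteq> {p. prime p \<and> 3 \<le> p}"
  shows "u * (\<Sum>p\<in>F. ln (real p) / ((real p - 2) * real p powr u)) \<le> 1"
proof -
  define t where "t = (3::real) powr (- u)"
  have F: "\<forall>p\<in>F. prime p \<and> 3 \<le> p"
    using assms(3) by auto
  have t: "0 < t" "t \<le> 1"
    using assms(1) powr_mono[of "- u" 0 3] by (auto simp: t_def)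
  have "0 \<le> t / 3 + 5 powr (- u) / (2 * u)"
    using assms(1) t by simp
  then have "1 \<le> odd_zeta (1 + u)"
    using odd_zeta_bounds(1)[OF assms(1)] by (simp add: t_def)
  then have "u * ((\<Sum>p\<in>F. ln (real p) / (real p powr (1 + u) - 1))
      + (\<Sum>p\<in>F. ln (real p) / ((real p - 2) * real p powr u) - ln (real p) / (real p powr (1 + u) - 1))) \<le> 1"
  proof (rule sum_bound_from_zeta_bounds[OF assms(1)])
    show "odd_zeta (1 + u) \<le> 1 + t / 3 + t / (2 * u)"
      using odd_zeta_bounds(2)[OF assms(1)] by (simp add: t_def)
    show "(\<Sum>p\<in>F. ln (real p) / (real p powr (1 + u) - 1)) * odd_zeta (1 + u) \<le> odd_log_zeta (1 + u)"
      using assms(1,2) F prime_odd_nat by (intro log_sum_times_odd_zeta_le) auto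
    show "(\<Sum>p\<in>F. ln (real p) / ((real p - 2) * real p powr u) - ln (real p) / (real p powr (1 + u) - 1))
        \<le> excess_bound t"
      using assms(1,2) F unfolding t_def by (intro sum_excess_le) auto
    show "0 \<le> excess_bound t"
      using t by (intro excess_bound_nonneg) auto
    show "(u + u * t / 3 + t / 2) * excess_bound t \<le> zeta_gap_bound u t"
      using excess_bound_le_zeta_gap_bound[OF assms(1)] by (simp add: t_def)
    show "zeta_gap_bound u t \<le> odd_zeta (1 + u) - u * odd_log_zeta (1 + u)"
      using odd_zeta_minus_log_zeta_ge[OF assms(1)] by (simp add: t_def)
  qed
  then show ?thesis
    by (simp add: sum_subtractf)
qed

theorem lemma3p4:
  fixes u :: real
  assumes "u > 0"
  shows "(\<lambda>p. ln (real p) / ((real p - 2) * real p powr u)) summable_on {p::nat. prime p \<and> p \<ge> 3}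
     \<and> u * (\<Sum>\<^sub>\<infinity>p\<in>{p::nat. prime p \<and> p \<ge> 3}. ln (real p) / ((real p - 2) * real p powr u)) \<le> 1"
proof -
  let ?f = "\<lambda>p. ln (real p) / ((real p - 2) * real p powr u)"
  let ?P = "{p::nat. prime p \<and> p \<ge> 3}"
  have finite_sums: "sum ?f F \<le> 1 / u" if "finite F" "F \<subseteq> ?P" for F
    using finite_partial_sum_le[OF assms that] assms by (simp add: field_simps mult.commute)
  have summable: "?f summable_on ?P"
    using finite_sums
    by (intro nonneg_bdd_above_summable_on bdd_aboveI[where M = "1 / u"]) auto
  have "infsum ?f ?P \<le> 1 / u"
    using summable finite_sums by (rule infsum_le_finite_sums)
  then show ?thesis
    using summable assms by (simp add: field_simps mult.commute)
qed

end
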